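(* For every $\lambda\ge 0$, consider the signed variant of xOrder, in which $\widehat G$ is replaced by $\widehat G^{s}(q)=\frac{k_{a,b}}{k}A(q)+\frac{k_{b,a}}{k}B(q)-\lambda\,(A(q)-B(q))$ and the dynamic programming is otherwise unchanged. Its output $O(n^a,n^b)$ is a global maximizer, over all cross-group orderings $o$ of $(\mathrm{p}^a,\mathrm{p}^b)$, of $$J^{s}(o)=\mathrm{AUC}^o-\lambda\big(\mathrm{xAUC}^o(a,b)-\mathrm{xAUC}^o(b,a)\big).$$
   Context: Setting: two disjoint finite groups $a,b$ of instances with labels $Y_u\in\{0,1\}$; $n^g,n^g_1,n^g_0$ denote size, positives and negatives of group $g$ (all $\ge1$); $n_1=n_1^a+n_1^b$, $n_0=n_0^a+n_0^b$, $k_{a,b}=n_1^an_0^b$, $k_{b,a}=n_0^an_1^b$, $k=n_0n_1$. $\mathrm{p}^a=(\mathrm{p}^{a(1)},\dots,\mathrm{p}^{a(n^a)})$, $\mathrm{p}^b=(\mathrm{p}^{b(1)},\dots,\mathrm{p}^{b(n^b)})$ are fixed orderings of the groups. A cross-group ordering is a list of all instances of $a\cup b$ preserving the relative orders within $\mathrm{p}^a$ and within $\mathrm{p}^b$; "precedes" means ranked higher. $\mathrm{AUC}^o=\frac{1}{n_1n_0}\#\{(u,v):Y_u=1,Y_v=0,u\text{ precedes }v\text{ in }o\}$; $\mathrm{xAUC}^o(a,b)=\frac{1}{n_1^an_0^b}\#\{(u,v):u\in a,Y_u=1,v\in b,Y_v=0,u\text{ precedes }v\}$, $\mathrm{xAUC}^o(b,a)$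 symmetrically. For $0\le i\le n^a$, $0\le j\le n^b$ and a list $q$ interleaving $\mathrm{p}^{a(1)},\dots,\mathrm{p}^{a(i)}$ and $\mathrm{p}^{b(1)},\dots,\mathrm{p}^{b(j)}$ with within-group orders preserved, let $q^{\to b}$ be $q$ followed by $\mathrm{p}^{b(j+1)},\dots,\mathrm{p}^{b(n^b)}$ and $q^{\to a}$ be $q$ followed by $\mathrm{p}^{a(i+1)},\dots,\mathrm{p}^{a(n^a)}$; $A(q)=\frac{1}{n_1^an_0^b}\#\{(u,v): u\in\{\mathrm{p}^{a(1)},..,\mathrm{p}^{a(i)}\},Y_u=1,v\in b,Y_v=0,u\text{ precedes }v\text{ in }q^{\to b}\}$, $B(q)=\frac{1}{n_1^bn_0^a}\#\{(u,v): u\in\{\mathrm{p}^{b(1)},..,\mathrm{p}^{b(j)}\},Y_u=1,v\in a,Y_v=0,u\text{ precedes }v\text{ in }q^{\to a}\}$. Dynamic programming: $O(i,0)=(\mathrm{p}^{a(1)},\dots,\mathrm{p}^{a(i)})$, $O(0,j)=(\mathrm{p}^{b(1)},\dots,\mathrm{p}^{b(j)})$; for $i=1,\dots,n^a$, $j=1,\dots,n^b$ in increasing order, $O(i,j)=O(i-1,j)\oplus\mathrm{p}^{a(i)}$ if $\widehat G^s(O(i-1,j)\oplus\mathrm{p}^{a(i)})>\widehat G^s(O(i,j-1)\oplus\mathrm{p}^{b(j)})$, and $O(i,j)=O(i,j-1)\oplus\mathrm{p}^{b(j)}$ otherwise ($\oplus$ appends an element to the end of a list). *)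

theory Defs
  imports Main "HOL.Real"
begin

text \<open>Instances have an abstract type 'x; the label Y u = True means Y_u = 1.
  Groups are given by their fixed orderings pa, pb (distinct, disjoint lists).\<close>

definition precedes :: "'x list \<Rightarrow> 'x \<Rightarrow> 'x \<Rightarrow> bool" where
  "precedes r u v \<longleftrightarrow> (\<exists>i j. i < j \<and> j < length r \<and> r ! i = u \<and> r ! j = v)"

definition npos :: "('x \<Rightarrow> bool) \<Rightarrow> 'x list \<Rightarrow> real" where
  "npos Y p = real (card {u \<in> set p. Y u})"

definition nneg :: "('x \<Rightarrow> bool) \<Rightarrow> 'x list \<Rightarrow> real" where
  "nneg Y p = real (card {u \<in> set p. \<not> Y u})"

definition cnt :: "('x \<Rightarrow> bool) \<Rightarrow> 'x set \<Rightarrow> 'x set \<Rightarrow> 'x list \<Rightarrow> real" where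
  "cnt Y S T r = real (card {(u, v). u \<in> S \<and> Y u \<and> v \<in> T \<and> \<not> Y v \<and> precedes r u v})"

definition AUC :: "('x \<Rightarrow> bool) \<Rightarrow> 'x list \<Rightarrow> 'x list \<Rightarrow> 'x list \<Rightarrow> real" where
  "AUC Y pa pb r =
     cnt Y (set pa \<union> set pb) (set pa \<union> set pb) r
       / ((npos Y pa + npos Y pb) * (nneg Y pa + nneg Y pb))"

definition xAUC :: "('x \<Rightarrow> bool) \<Rightarrow> 'x list \<Rightarrow> 'x list \<Rightarrow> 'x list \<Rightarrow> real" where
  "xAUC Y pg ph r = cnt Y (set pg) (set ph) r / (npos Y pg * nneg Y ph)"

definition Jsig :: "real \<Rightarrow> ('x \<Rightarrow> bool) \<Rightarrow> 'x list \<Rightarrow> 'x list \<Rightarrow> 'x list \<Rightarrow> real" where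
  "Jsig lam Y pa pb r = AUC Y pa pb r - lam * (xAUC Y pa pb r - xAUC Y pb pa r)"

text \<open>A(q) and B(q) for a partial interleaving q of the first i elements of pa and
  the first j elements of pb.\<close>
definition Aq :: "('x \<Rightarrow> bool) \<Rightarrow> 'x list \<Rightarrow> 'x list \<Rightarrow> nat \<Rightarrow> nat \<Rightarrow> 'x list \<Rightarrow> real" where
  "Aq Y pa pb i j q =
     cnt Y (set (take i pa)) (set pb) (q @ drop j pb) / (npos Y pa * nneg Y pb)"

definition Bq :: "('x \<Rightarrow> bool) \<Rightarrow> 'x list \<Rightarrow> 'x list \<Rightarrow> nat \<Rightarrow> nat \<Rightarrow> 'x list \<Rightarrow> real" where
  "Bq Y pa pb i j q =
     cnt Y (set (take j pb)) (set pa) (q @ drop i pa) / (npos Y pb * nneg Y pa)"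

definition Gs :: "real \<Rightarrow> ('x \<Rightarrow> bool) \<Rightarrow> 'x list \<Rightarrow> 'x list \<Rightarrow> nat \<Rightarrow> nat \<Rightarrow> 'x list \<Rightarrow> real" where
  "Gs lam Y pa pb i j q =
     (let kab = npos Y pa * nneg Y pb;
          kba = nneg Y pa * npos Y pb;
          k = (nneg Y pa + nneg Y pb) * (npos Y pa + npos Y pb);
          A = Aq Y pa pb i j q;
          B = Bq Y pa pb i j q
      in kab / k * A + kba / k * B - lam * (A - B))"

text \<open>The dynamic programme; ODP i j is O(i,j). Note pa ! i is p^{a(i+1)} (0-based).\<close>
fun ODP :: "real \<Rightarrow> ('x \<Rightarrow> bool) \<Rightarrow> 'x list \<Rightarrow> 'x list \<Rightarrow> nat \<Rightarrow> nat \<Rightarrow> 'x list" where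
  "ODP lam Y pa pb 0 j = take j pb"
| "ODP lam Y pa pb (Suc i) 0 = take (Suc i) pa"
| "ODP lam Y pa pb (Suc i) (Suc j) =
     (let c1 = ODP lam Y pa pb i (Suc j) @ [pa ! i];
          c2 = ODP lam Y pa pb (Suc i) j @ [pb ! j]
      in if Gs lam Y pa pb (Suc i) (Suc j) c1 > Gs lam Y pa pb (Suc i) (Suc j) c2
         then c1 else c2)"

end

theory Submission
  imports Defs
begin

text \<open>Appending the next element x of group a to a partial interleaving q leaves B unchanged
  and adds to A the pairs (x, v) with v a not yet placed negative of b; neither depends on the
  order inside q. So \<open>G\<^sup>s\<close> grows by a prefix-independent amount with each step, the best
  interleaving ending in x extends the best interleaving of the remaining prefixes, and the
  dynamic programme maximizes \<open>G\<^sup>s\<close> over all interleavings. On complete orderings \<open>J\<^sup>s\<close> is \<open>G\<^sup>s\<close>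
  plus the within-group pair counts, which all interleavings share.\<close>

lemma precedes_Nil [simp]: "\<not> precedes [] u v"
  by (simp add: precedes_def)

lemma precedes_Cons [simp]:
  "precedes (a # r) u v \<longleftrightarrow> a = u \<and> v \<in> set r \<or> precedes r u v"
proof
  assume "precedes (a # r) u v"
  then obtain i j where "i < j" "j < length (a # r)" "(a # r) ! i = u" "(a # r) ! j = v"
    unfolding precedes_def by blast
  then show "a = u \<and> v \<in> set r \<or> precedes r u v"
    unfolding precedes_def by (cases i; cases j) auto
next
  assume "a = u \<and> v \<in> set r \<or> precedes r u v"
  then show "precedes (a # r) u v"
  proof
    assume "a = u \<and> v \<in> set r"
    then obtain j where "j < length r" "r ! j = v" "a = u" by (auto simp: in_set_conv_nth)
    then show ?thesis unfolding precedes_def by (intro exI[of _ 0] exI[of _ "Suc j"]) auto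
  next
    assume "precedes r u v"
    then obtain i j where "i < j" "j < length r" "r ! i = u" "r ! j = v"
      unfolding precedes_def by blast
    then show ?thesis unfolding precedes_def by (intro exI[of _ "Suc i"] exI[of _ "Suc j"]) auto
  qed
qed

lemma precedes_append:
  "precedes (xs @ ys) u v \<longleftrightarrow> precedes xs u v \<or> precedes ys u v \<or> u \<in> set xs \<and> v \<in> set ys"
  by (induction xs) auto

lemma precedes_imp_in_set: "precedes r u v \<Longrightarrow> u \<in> set r \<and> v \<in> set r"
  by (induction r) auto

lemma precedes_filter: "P u \<Longrightarrow> P v \<Longrightarrow> precedes (filter P r) u v \<longleftrightarrow> precedes r u v"
  by (induction r) auto

lemma snoc_in_shuffles_leftI: "zs \<in> shuffles xs ys \<Longrightarrow> zs @ [x] \<in> shuffles (xs @ [x]) ys"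
proof (induction xs ys arbitrary: zs rule: shuffles.induct)
  case (1 ys)
  have "ys @ [x] \<in> shuffles [x] ys"
    by (induction ys) (auto intro: Cons_in_shuffles_rightI)
  with 1 show ?case by simp
next
  case (3 x' xs y ys)
  then show ?case by (auto intro: Cons_in_shuffles_leftI Cons_in_shuffles_rightI)
qed simp

lemma snoc_in_shuffles_rightI: "zs \<in> shuffles xs ys \<Longrightarrow> zs @ [y] \<in> shuffles xs (ys @ [y])"
  using snoc_in_shuffles_leftI[of zs ys xs y] by (simp add: shuffles_commutes)

lemma shuffles_last_cases:
  "zs \<in> shuffles xs ys \<Longrightarrow> zs \<noteq> [] \<Longrightarrow>
   xs \<noteq> [] \<and> last zs = last xs \<and> butlast zs \<in> shuffles (butlast xs) ys \<or>
   ys \<noteq> [] \<and> last zs = last ys \<and> butlast zs \<in> shuffles xs (butlast ys)"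
proof (induction xs ys arbitrary: zs rule: shuffles.induct)
  case (3 x xs y ys)
  from "3.prems"(1) obtain z zs' where zs: "zs = z # zs'" and
    "z = x \<and> zs' \<in> shuffles xs (y # ys) \<or> z = y \<and> zs' \<in> shuffles (x # xs) ys"
    by auto
  then show ?case
  proof (elim disjE conjE)
    assume "z = x" "zs' \<in> shuffles xs (y # ys)"
    with "3.IH"(1)[of zs'] show ?thesis unfolding zs by (auto intro: Cons_in_shuffles_leftI)
  next
    assume "z = y" "zs' \<in> shuffles (x # xs) ys"
    with "3.IH"(2)[of zs'] show ?thesis unfolding zs by (auto intro: Cons_in_shuffles_rightI)
  qed
qed simp_all

lemma shuffles_snoc_snoc:
  "shuffles (xs @ [x]) (ys @ [y]) =
     (\<lambda>zs. zs @ [x]) ` shuffles xs (ys @ [y]) \<union> (\<lambda>zs. zs @ [y]) ` shuffles (xs @ [x]) ys"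
proof (intro equalityI subsetI)
  fix zs assume zs: "zs \<in> shuffles (xs @ [x]) (ys @ [y])"
  then have "zs \<noteq> []" by auto
  from shuffles_last_cases[OF zs this] show
    "zs \<in> (\<lambda>zs. zs @ [x]) ` shuffles xs (ys @ [y]) \<union> (\<lambda>zs. zs @ [y]) ` shuffles (xs @ [x]) ys"
    using \<open>zs \<noteq> []\<close> by (metis UnI1 UnI2 append_butlast_last_id butlast_snoc image_eqI last_snoc)
qed (auto intro: snoc_in_shuffles_leftI snoc_in_shuffles_rightI)

lemma cnt_eq_sum:
  assumes "finite S" "finite T"
  shows "cnt Y S T r = (\<Sum>u\<in>S. \<Sum>v\<in>T. of_bool (Y u \<and> \<not> Y v \<and> precedes r u v))"
proof -
  have "(\<Sum>u\<in>S. \<Sum>v\<in>T. of_bool (Y u \<and> \<not> Y v \<and> precedes r u v))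
      = (\<Sum>(u, v)\<in>S \<times> T. (of_bool (Y u \<and> \<not> Y v \<and> precedes r u v) :: real))"
    by (simp del: sum_of_bool_eq add: sum.cartesian_product)
  also have "\<dots> = real (card ((S \<times> T) \<inter> {(u, v). Y u \<and> \<not> Y v \<and> precedes r u v}))"
    using assms by (simp add: case_prod_beta split_def)
  also have "(S \<times> T) \<inter> {(u, v). Y u \<and> \<not> Y v \<and> precedes r u v}
      = {(u, v). u \<in> S \<and> Y u \<and> v \<in> T \<and> \<not> Y v \<and> precedes r u v}" by auto
  finally show ?thesis by (simp add: cnt_def)
qed

lemma cnt_filter:
  assumes "\<forall>u\<in>S. P u" "\<forall>v\<in>T. P v"
  shows "cnt Y S T (filter P r) = cnt Y S T r"
  using assms by (simp add: cnt_def precedes_filter cong: conj_cong)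

lemma cnt_shuffles_within:
  assumes "r \<in> shuffles xs ys" "set xs \<inter> set ys = {}"
  shows "cnt Y (set xs) (set xs) r = cnt Y (set xs) (set xs) xs"
  using cnt_filter[of "set xs" "\<lambda>x. x \<in> set xs" "set xs" Y r]
    filter_shuffles_disjoint1(1)[OF assms(2,1)] by simp

lemma cnt_Un_Un:
  assumes "finite A" "finite B" "A \<inter> B = {}"
  shows "cnt Y (A \<union> B) (A \<union> B) r = cnt Y A A r + cnt Y A B r + cnt Y B A r + cnt Y B B r"
  using assms by (simp del: sum_of_bool_eq add: cnt_eq_sum sum.union_disjoint sum.distrib)

lemma cnt_insert_middle:
  assumes "finite S" "finite T" "x \<notin> S" "x \<notin> T" "x \<notin> set q"
  shows "cnt Y (insert x S) T (q @ x # d) = cnt Y S T (q @ d) + cnt Y {x} T (x # d)"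
proof -
  have "precedes (q @ x # d) u v \<longleftrightarrow> precedes (q @ d) u v" if "u \<in> S" "v \<in> T" for u v
    using that assms(3,4) by (auto simp: precedes_append)
  moreover have "precedes (q @ x # d) x v \<longleftrightarrow> precedes (x # d) x v" for v
    using assms(5) by (auto simp: precedes_append dest: precedes_imp_in_set)
  ultimately show ?thesis
    using assms by (simp del: sum_of_bool_eq add: cnt_eq_sum cong: sum.cong)
qed

lemma nth_notin_set_take: "distinct xs \<Longrightarrow> i < length xs \<Longrightarrow> xs ! i \<notin> set (take i xs)"
  using distinct_take[of xs "Suc i"] by (simp add: take_Suc_conv_app_nth)

lemma Aq_snoc_left:
  assumes "distinct pa" "set pa \<inter> set pb = {}" "i < length pa" "pa ! i \<notin> set q"
  shows "Aq Y pa pb (Suc i) j (q @ [pa ! i])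
    = Aq Y pa pb i j q + cnt Y {pa ! i} (set pb) (pa ! i # drop j pb) / (npos Y pa * nneg Y pb)"
proof -
  have "pa ! i \<notin> set (take i pa)" using assms(1,3) by (rule nth_notin_set_take)
  moreover have "pa ! i \<notin> set pb" using assms(2,3) by (meson disjoint_iff nth_mem)
  ultimately show ?thesis
    using assms(4) cnt_insert_middle[of "set (take i pa)" "set pb" "pa ! i" q Y "drop j pb"]
    by (simp add: Aq_def take_Suc_conv_app_nth[OF assms(3)] add_divide_distrib)
qed

lemma Bq_snoc_left:
  "i < length pa \<Longrightarrow> Bq Y pa pb (Suc i) j (q @ [pa ! i]) = Bq Y pa pb i j q"
  by (simp add: Bq_def Cons_nth_drop_Suc)

lemma Aq_eq_Bq_swap: "Aq Y pa pb i j q = Bq Y pb pa j i q"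
  by (simp add: Aq_def Bq_def)

lemma Gs_swap: "Gs lam Y pa pb i j q = Gs (- lam) Y pb pa j i q"
  by (simp add: Gs_def Aq_eq_Bq_swap Let_def algebra_simps)

lemma Gs_snoc_left_gain:
  assumes "distinct pa" "set pa \<inter> set pb = {}" "i < length pa"
  shows "\<exists>c. \<forall>q. pa ! i \<notin> set q \<longrightarrow>
    Gs lam Y pa pb (Suc i) j (q @ [pa ! i]) = Gs lam Y pa pb i j q + c"
proof -
  define D where "D = cnt Y {pa ! i} (set pb) (pa ! i # drop j pb) / (npos Y pa * nneg Y pb)"
  have "Gs lam Y pa pb (Suc i) j (q @ [pa ! i]) = Gs lam Y pa pb i j q
      + (npos Y pa * nneg Y pb / ((nneg Y pa + nneg Y pb) * (npos Y pa + npos Y pb)) - lam) * D"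
    if "pa ! i \<notin> set q" for q
  proof -
    have "Aq Y pa pb (Suc i) j (q @ [pa ! i]) = Aq Y pa pb i j q + D"
      unfolding D_def by (rule Aq_snoc_left[OF assms that])
    then show ?thesis
      by (simp add: Gs_def Let_def Bq_snoc_left[OF assms(3)] algebra_simps add_divide_distrib)
  qed
  then show ?thesis by blast
qed

lemma Gs_snoc_right_gain:
  assumes "distinct pb" "set pa \<inter> set pb = {}" "j < length pb"
  shows "\<exists>c. \<forall>q. pb ! j \<notin> set q \<longrightarrow>
    Gs lam Y pa pb i (Suc j) (q @ [pb ! j]) = Gs lam Y pa pb i j q + c"
proof -
  obtain c where "\<forall>q. pb ! j \<notin> set q \<longrightarrow>
      Gs (- lam) Y pb pa (Suc j) i (q @ [pb ! j]) = Gs (- lam) Y pb pa j i q + c"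
    using Gs_snoc_left_gain[of pb pa j "- lam" Y i] assms by (auto simp: Int_commute)
  then show ?thesis unfolding Gs_swap[of lam Y pa pb] by blast
qed

lemma ODP_is_arg_max:
  assumes "distinct pa" "distinct pb" "set pa \<inter> set pb = {}"
    and "i \<le> length pa" "j \<le> length pb"
  shows "is_arg_max (Gs lam Y pa pb i j) (\<lambda>q. q \<in> shuffles (take i pa) (take j pb))
    (ODP lam Y pa pb i j)"
  using assms
proof (induction lam Y pa pb i j rule: ODP.induct)
  case (3 lam Y pa pb i j)
  let ?G = "Gs lam Y pa pb (Suc i) (Suc j)"
  define x where "x = pa ! i"
  define y where "y = pb ! j"
  define c1 where "c1 = ODP lam Y pa pb i (Suc j) @ [x]"
  define c2 where "c2 = ODP lam Y pa pb (Suc i) j @ [y]"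
  have i: "i < length pa" and j: "j < length pb" using "3.prems" by auto
  have takes: "take (Suc i) pa = take i pa @ [x]" "take (Suc j) pb = take j pb @ [y]"
    using i j by (simp_all add: x_def y_def take_Suc_conv_app_nth)
  obtain cA where cA: "\<forall>q. x \<notin> set q \<longrightarrow> ?G (q @ [x]) = Gs lam Y pa pb i (Suc j) q + cA"
    using Gs_snoc_left_gain[OF "3.prems"(1,3) i] unfolding x_def by blast
  obtain cB where cB: "\<forall>q. y \<notin> set q \<longrightarrow> ?G (q @ [y]) = Gs lam Y pa pb (Suc i) j q + cB"
    using Gs_snoc_right_gain[OF "3.prems"(2,3) j] unfolding y_def by blast
  have x_fresh: "x \<notin> set q" if "q \<in> shuffles (take i pa) (take (Suc j) pb)" for q
    using set_shuffles[OF that] nth_notin_set_take[OF "3.prems"(1) i] "3.prems"(3) i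
    by (auto simp: x_def dest: nth_mem in_set_takeD)
  have y_fresh: "y \<notin> set q" if "q \<in> shuffles (take (Suc i) pa) (take j pb)" for q
    using set_shuffles[OF that] nth_notin_set_take[OF "3.prems"(2) j] "3.prems"(3) j
    by (auto simp: y_def dest: nth_mem in_set_takeD)
  have IH1: "is_arg_max (Gs lam Y pa pb i (Suc j))
      (\<lambda>q. q \<in> shuffles (take i pa) (take (Suc j) pb)) (ODP lam Y pa pb i (Suc j))"
    and IH2: "is_arg_max (Gs lam Y pa pb (Suc i) j)
      (\<lambda>q. q \<in> shuffles (take (Suc i) pa) (take j pb)) (ODP lam Y pa pb (Suc i) j)"
    using "3.IH" "3.prems" by auto
  have le_c1: "?G (q @ [x]) \<le> ?G c1" if "q \<in> shuffles (take i pa) (take (Suc j) pb)" for q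
    using IH1 that cA x_fresh[OF that] x_fresh[of "ODP lam Y pa pb i (Suc j)"]
    by (auto simp: c1_def is_arg_max_linorder)
  have le_c2: "?G (q @ [y]) \<le> ?G c2" if "q \<in> shuffles (take (Suc i) pa) (take j pb)" for q
    using IH2 that cB y_fresh[OF that] y_fresh[of "ODP lam Y pa pb (Suc i) j"]
    by (auto simp: c2_def is_arg_max_linorder)
  have ODP_eq: "ODP lam Y pa pb (Suc i) (Suc j) = (if ?G c1 > ?G c2 then c1 else c2)"
    by (simp add: c1_def c2_def x_def y_def Let_def)
  have "c1 \<in> shuffles (take (Suc i) pa) (take (Suc j) pb)"
    "c2 \<in> shuffles (take (Suc i) pa) (take (Suc j) pb)"
    using IH1 IH2 unfolding c1_def c2_def takes shuffles_snoc_snoc is_arg_max_linorder by auto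
  moreover have "?G q \<le> max (?G c1) (?G c2)"
    if "q \<in> shuffles (take (Suc i) pa) (take (Suc j) pb)" for q
    using that le_c1 le_c2 unfolding takes shuffles_snoc_snoc by fastforce
  ultimately show ?case
    unfolding is_arg_max_linorder ODP_eq by (auto simp: max_def)
qed (simp_all add: is_arg_max_linorder)

lemma Jsig_eq_Gs:
  assumes r: "r \<in> shuffles pa pb" and disj: "set pa \<inter> set pb = {}"
    and pos: "npos Y pa > 0" "nneg Y pa > 0" "npos Y pb > 0" "nneg Y pb > 0"
  shows "Jsig lam Y pa pb r =
      (cnt Y (set pa) (set pa) pa + cnt Y (set pb) (set pb) pb)
        / ((npos Y pa + npos Y pb) * (nneg Y pa + nneg Y pb))
      + Gs lam Y pa pb (length pa) (length pb) r"
proof -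
  have "cnt Y (set pa \<union> set pb) (set pa \<union> set pb) r
      = cnt Y (set pa) (set pa) pa + cnt Y (set pb) (set pb) pb
        + cnt Y (set pa) (set pb) r + cnt Y (set pb) (set pa) r"
    using cnt_Un_Un[of "set pa" "set pb" Y r] disj cnt_shuffles_within[OF r disj]
      cnt_shuffles_within[of r pb pa] r by (simp add: shuffles_commutes Int_commute)
  moreover have "(nneg Y pa + nneg Y pb) * (npos Y pa + npos Y pb) \<noteq> 0" using pos by simp
  ultimately show ?thesis
    using pos by (simp add: Jsig_def AUC_def xAUC_def Gs_def Let_def Aq_def Bq_def
        add_divide_distrib mult.commute)
qed

theorem mainTheorem5:
  fixes lam :: real and Y :: "'x \<Rightarrow> bool" and pa pb :: "'x list"
  assumes "lam \<ge> 0"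
    and "distinct pa" and "distinct pb" and "set pa \<inter> set pb = {}"
    and "npos Y pa \<ge> 1" and "nneg Y pa \<ge> 1"
    and "npos Y pb \<ge> 1" and "nneg Y pb \<ge> 1"
  shows "ODP lam Y pa pb (length pa) (length pb) \<in> shuffles pa pb
    \<and> (\<forall>r \<in> shuffles pa pb.
          Jsig lam Y pa pb r \<le> Jsig lam Y pa pb (ODP lam Y pa pb (length pa) (length pb)))"
proof -
  let ?O = "ODP lam Y pa pb (length pa) (length pb)"
  let ?G = "Gs lam Y pa pb (length pa) (length pb)"
  have max: "is_arg_max ?G (\<lambda>q. q \<in> shuffles pa pb) ?O"
    using ODP_is_arg_max[OF assms(2-4) order.refl order.refl, of lam Y] by simp
  then have O_in: "?O \<in> shuffles pa pb" by (simp add: is_arg_max_linorder)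
  show ?thesis
  proof (intro conjI ballI O_in)
    fix r assume r: "r \<in> shuffles pa pb"
    show "Jsig lam Y pa pb r \<le> Jsig lam Y pa pb ?O"
      using max r Jsig_eq_Gs[OF r assms(4)] Jsig_eq_Gs[OF O_in assms(4)] assms(5-8)
      by (simp add: is_arg_max_linorder)
  qed
qed

end
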